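(* Let $p$ be a prime and $1\le e<p$. For all but finitely many integers $n\ge1$ there exists $c\in\overline{\mathbb{F}_p}$ such that the correspondence $C_c:y^e=x^p+c$ over $\overline{\mathbb{F}_p}$ admits a sequence $x_0=0,x_1,\dots,x_n=0$ with $(x_i,x_{i+1})\in C_c$ for $0\le i<n$, but admits no sequence $x_0=0,x_1,\dots,x_m=0$ with $(x_i,x_{i+1})\in C_c$ for $0\le i<m$ and $1\le m<n$.
   Context: $C_c=\{(a,b)\in\overline{\mathbb{F}_p}^2: b^e=a^p+c\}$. *)

theory Defs
  imports "Berlekamp_Zassenhaus.Finite_Field" "HOL-Algebra.Algebraic_Closure_Type"
begin

definition corr :: "nat \<Rightarrow> nat \<Rightarrow> 'a::comm_ring_1 \<Rightarrow> ('a \<times> 'a) set" where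
  "corr p e c = {(a, b). b ^ e = a ^ p + c}"

definition zero_cycle :: "('a::zero \<times> 'a) set \<Rightarrow> nat \<Rightarrow> bool" where
  "zero_cycle C n \<longleftrightarrow> (\<exists>x :: nat \<Rightarrow> 'a. x 0 = 0 \<and> x n = 0 \<and> (\<forall>i<n. (x i, x (Suc i)) \<in> C))"

end

theory Submission
  imports Defs
begin

text \<open>
  Let H_0 = 0 and H_(k+1) = H_k^e - X^(p^k). Raising y^e = x^p + c to the power p^k and using
  that Frobenius is additive and injective, a chain 0 = x_0, ..., x_n = 0 in C_c exists iff
  H_n(c) = 0; over an algebraically closed field such a chain is rebuilt from p^k-th roots of the
  values H_k(c). Now deg H_n = p^(n-1), and since X^(p^k) has zero derivative for k > 0,
  H_n' = e H_(n-1)^(e-1) H_(n-1)' is nonzero of degree at most (e-1)(1 + p + ... + p^(n-2)).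
  A polynomial f has at least deg f - deg f' distinct roots, so e < p gives H_n more than
  1 + p + ... + p^(n-2) roots, more than H_1, ..., H_(n-1) have together. Hence some root of H_n
  is a root of no earlier H_m, and the exceptional set is in fact empty.
\<close>

hide_const (open) Polynomials.degree Polynomials.lead_coeff

lemma power_char_add:
  fixes x y :: "'a::comm_ring_1"
  assumes "Factorial_Ring.prime CHAR('a)"
  shows "(x + y) ^ CHAR('a) = x ^ CHAR('a) + y ^ CHAR('a)"
proof -
  let ?p = "CHAR('a)"
  have "(x + y) ^ ?p = (\<Sum>k\<le>?p. of_nat (?p choose k) * x ^ k * y ^ (?p - k))"
    by (rule binomial_ring)
  also have "\<dots> = (\<Sum>k\<in>{0, ?p}. of_nat (?p choose k) * x ^ k * y ^ (?p - k))"
  proof (rule sum.mono_neutral_right)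
    show "\<forall>i\<in>{..?p} - {0, ?p}. of_nat (?p choose i) * x ^ i * y ^ (?p - i) = 0"
    proof
      fix i assume i: "i \<in> {..?p} - {0, ?p}"
      have "?p dvd (?p choose i)"
        by (rule dvd_choose_prime) (use i assms in auto)
      then have "of_nat (?p choose i) = (0 :: 'a)"
        by (simp add: of_nat_eq_0_iff_char_dvd)
      then show "of_nat (?p choose i) * x ^ i * y ^ (?p - i) = 0"
        by simp
    qed
  qed auto
  also have "\<dots> = x ^ ?p + y ^ ?p"
    using assms by auto
  finally show ?thesis .
qed

lemma power_char_power_add:
  fixes x y :: "'a::comm_ring_1"
  assumes "Factorial_Ring.prime CHAR('a)"
  shows "(x + y) ^ (CHAR('a) ^ k) = x ^ (CHAR('a) ^ k) + y ^ (CHAR('a) ^ k)"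
  by (induction k arbitrary: x y) (simp_all add: power_mult power_char_add[OF assms])

lemma power_char_power_diff:
  fixes x y :: "'a::comm_ring_1"
  assumes "Factorial_Ring.prime CHAR('a)"
  shows "(x - y) ^ (CHAR('a) ^ k) = x ^ (CHAR('a) ^ k) - y ^ (CHAR('a) ^ k)"
  using power_char_power_add[OF assms, of "x - y" y k] by (simp add: algebra_simps)

lemma power_char_power_eq_iff:
  fixes x y :: "'a::idom"
  assumes "Factorial_Ring.prime CHAR('a)"
  shows "x ^ (CHAR('a) ^ k) = y ^ (CHAR('a) ^ k) \<longleftrightarrow> x = y"
  using power_char_power_diff[OF assms, of x y k] by auto

text \<open>
  cycle_poly e k is H_k: along a chain in C_c ending in x_m = 0 one has x_(m-k)^(p^k) = H_k(c).
\<close>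
fun cycle_poly :: "nat \<Rightarrow> nat \<Rightarrow> 'a::comm_ring_1 poly" where
  "cycle_poly e 0 = 0"
| "cycle_poly e (Suc k) = cycle_poly e k ^ e - monom 1 (CHAR('a) ^ k)"

lemma poly_cycle_poly_Suc:
  fixes c :: "'a::comm_ring_1"
  shows "poly (cycle_poly e (Suc k)) c = poly (cycle_poly e k) c ^ e - c ^ (CHAR('a) ^ k)"
  by (simp add: poly_monom)

declare cycle_poly.simps(2) [simp del]

lemma power_chain_eq_poly_cycle_poly:
  fixes x :: "nat \<Rightarrow> 'a::comm_ring_1"
  assumes prime: "Factorial_Ring.prime CHAR('a)" and end_zero: "x m = 0"
    and chain: "\<And>i. i < m \<Longrightarrow> (x i, x (Suc i)) \<in> corr CHAR('a) e c"
    and "k \<le> m"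
  shows "x (m - k) ^ (CHAR('a) ^ k) = poly (cycle_poly e k) c"
  using \<open>k \<le> m\<close>
proof (induction k)
  case 0
  then show ?case using end_zero by simp
next
  case (Suc k)
  let ?p = "CHAR('a)"
  have step: "x (m - Suc k) ^ ?p = x (m - k) ^ e - c"
    using chain[of "m - Suc k"] Suc.prems by (simp add: corr_def Suc_diff_Suc)
  have "x (m - Suc k) ^ (?p ^ Suc k) = (x (m - Suc k) ^ ?p) ^ (?p ^ k)"
    by (simp add: power_mult)
  also have "\<dots> = (x (m - k) ^ e) ^ (?p ^ k) - c ^ (?p ^ k)"
    unfolding step by (rule power_char_power_diff[OF prime])
  also have "\<dots> = (x (m - k) ^ (?p ^ k)) ^ e - c ^ (?p ^ k)"
    by (simp only: mult.commute flip: power_mult)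
  also have "\<dots> = poly (cycle_poly e (Suc k)) c"
    using Suc by (simp add: poly_cycle_poly_Suc)
  finally show ?case .
qed

lemma zero_cycle_imp_poly_cycle_poly_eq_0:
  fixes c :: "'a::comm_ring_1"
  assumes prime: "Factorial_Ring.prime CHAR('a)"
    and "zero_cycle (corr CHAR('a) e c) n"
  shows "poly (cycle_poly e n) c = 0"
proof -
  obtain x :: "nat \<Rightarrow> 'a" where x: "x 0 = 0" "x n = 0"
    and chain: "\<And>i. i < n \<Longrightarrow> (x i, x (Suc i)) \<in> corr CHAR('a) e c"
    using assms(2) unfolding zero_cycle_def by blast
  have "x (n - n) ^ (CHAR('a) ^ n) = poly (cycle_poly e n) c"
    using power_chain_eq_poly_cycle_poly[OF prime x(2) chain] by blast
  moreover have "CHAR('a) ^ n \<noteq> 0"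
    using prime by (simp add: prime_gt_0_nat)
  ultimately show ?thesis
    using x(1) by (simp add: zero_power)
qed

lemma poly_cycle_poly_eq_0_imp_zero_cycle:
  fixes c :: "'a::alg_closed_field"
  assumes prime: "Factorial_Ring.prime CHAR('a)"
    and root: "poly (cycle_poly e n) c = 0"
  shows "zero_cycle (corr CHAR('a) e c) n"
proof -
  let ?p = "CHAR('a)"
  have "\<forall>k. \<exists>z. z ^ (?p ^ k) = poly (cycle_poly e k) c"
    using prime by (intro allI nth_root_exists) (simp add: prime_gt_0_nat)
  then obtain y where y: "\<And>k. y k ^ (?p ^ k) = poly (cycle_poly e k) c"
    by metis
  have "(y (n - i), y (n - Suc i)) \<in> corr ?p e c" if "i < n" for i
  proof -
    define k where "k = n - Suc i"
    have "(y (Suc k) ^ ?p) ^ (?p ^ k) = poly (cycle_poly e (Suc k)) c"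
      using y[of "Suc k"] by (simp add: mult.commute flip: power_mult)
    also have "\<dots> = (y k ^ (?p ^ k)) ^ e - c ^ (?p ^ k)"
      by (simp only: poly_cycle_poly_Suc y)
    also have "\<dots> = (y k ^ e) ^ (?p ^ k) - c ^ (?p ^ k)"
      by (simp only: mult.commute flip: power_mult)
    also have "\<dots> = (y k ^ e - c) ^ (?p ^ k)"
      by (rule power_char_power_diff[OF prime, symmetric])
    finally have "y (Suc k) ^ ?p = y k ^ e - c"
      using power_char_power_eq_iff[OF prime] by blast
    moreover have "Suc k = n - i"
      using that by (simp add: k_def)
    ultimately show ?thesis
      by (simp add: corr_def k_def eq_diff_eq)
  qed
  moreover have "y n = 0" "y 0 = 0"
    using y[of n] y[of 0] root by simp_all
  ultimately show ?thesis
    unfolding zero_cycle_def by (intro exI[of _ "\<lambda>i. y (n - i)"]) auto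
qed

lemma size_proots_alg_closed:
  fixes f :: "'a::alg_closed_field poly"
  assumes "f \<noteq> 0"
  shows "size (proots f) = degree f"
proof -
  obtain A where A: "size A = degree f" "f = smult (lead_coeff f) (\<Prod>x\<in>#A. [:-x, 1:])"
    using alg_closed_imp_factorization[OF assms] by blast
  have "proots f = proots (\<Prod>x\<in>#A. [:-x, 1:])"
    using assms by (subst A(2)) simp
  also have "\<dots> = A"
  proof (induction A)
    case (add x A)
    have "proots ([:-x, 1:] * (\<Prod>x\<in>#A. [:-x, 1:])) = add_mset x A"
      using add.IH by (subst proots_mult) auto
    then show ?case by simp
  qed simp
  finally show ?thesis using A(1) by simp
qed

lemma order_le_Suc_order_pderiv:
  fixes f :: "'a::idom poly"
  assumes "pderiv f \<noteq> 0"
  shows "order a f \<le> Suc (order a (pderiv f))"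
proof (cases "order a f")
  case (Suc k)
  obtain g where g: "f = [:-a, 1:] ^ Suc k * g"
    using order_1[of a f] Suc by (elim dvdE) auto
  have "pderiv f = [:-a, 1:] ^ Suc k * pderiv g + smult (of_nat (Suc k)) (g * [:-a, 1:] ^ k)"
    unfolding g by (rule lemma_order_pderiv1)
  then have "[:-a, 1:] ^ k dvd pderiv f"
    by (metis dvd_add dvd_mult2 dvd_smult dvd_triv_right le_imp_power_dvd le_SucI order_refl)
  then have "k \<le> order a (pderiv f)"
    using assms order_divides by blast
  then show ?thesis using Suc by simp
qed simp

lemma degree_le_card_roots_add_degree_pderiv:
  fixes f :: "'a::alg_closed_field poly"
  assumes f: "f \<noteq> 0" and f': "pderiv f \<noteq> 0"
  shows "degree f \<le> card {x. poly f x = 0} + degree (pderiv f)"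
proof -
  let ?R = "{x. poly f x = 0}" and ?R' = "{x. poly (pderiv f) x = 0}"
  have "degree f = size (proots f)"
    using f by (simp add: size_proots_alg_closed)
  also have "\<dots> = (\<Sum>x\<in>?R. order x f)"
    using f by (simp add: size_multiset_overloaded_eq)
  also have "\<dots> \<le> (\<Sum>x\<in>?R. Suc (order x (pderiv f)))"
    by (intro sum_mono order_le_Suc_order_pderiv f')
  also have "\<dots> = card ?R + (\<Sum>x\<in>?R. order x (pderiv f))"
    by (simp add: sum_Suc)
  also have "(\<Sum>x\<in>?R. order x (pderiv f)) = (\<Sum>x\<in>?R \<inter> ?R'. order x (pderiv f))"
    by (rule sum.mono_neutral_right) (use f f' poly_roots_finite in \<open>auto simp: order_0I\<close>)
  also have "\<dots> \<le> (\<Sum>x\<in>?R'. order x (pderiv f))"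
    by (rule sum_mono2) (use f' poly_roots_finite in auto)
  also have "\<dots> \<le> degree (pderiv f)"
    using f' by (rule sum_order_le_degree)
  finally show ?thesis by simp
qed

lemma geometric_sum_nat:
  fixes q :: nat
  assumes "1 \<le> q"
  shows "(q - 1) * (\<Sum>i<k. q ^ i) + 1 = q ^ k"
proof (induction k)
  case (Suc k)
  have "(q - 1) * (\<Sum>i<Suc k. q ^ i) + 1 = q ^ k + (q - 1) * q ^ k"
    using Suc by (simp add: algebra_simps)
  also have "\<dots> = q ^ Suc k"
    using assms by (simp add: algebra_simps)
  finally show ?case .
qed simp

lemma degree_cycle_poly:
  assumes "e < CHAR('a::idom)"
  shows "degree (cycle_poly e (Suc k) :: 'a poly) = CHAR('a) ^ k"
proof (induction k)
  case 0
  show ?case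
    by (cases e) (simp_all add: cycle_poly.simps(2) degree_monom_eq monom_Suc one_pCons)
next
  case (Suc k)
  let ?p = "CHAR('a)" and ?H = "cycle_poly e (Suc k) :: 'a poly"
  have "degree (?H ^ e) \<le> e * ?p ^ k"
    using degree_power_le[of ?H e] Suc by (simp add: mult.commute)
  also have "\<dots> < ?p ^ Suc k"
    using assms by simp
  finally have "degree (?H ^ e) < degree (- monom (1 :: 'a) (?p ^ Suc k))"
    by (simp add: degree_monom_eq)
  then have "degree (?H ^ e + - monom 1 (?p ^ Suc k)) = ?p ^ Suc k"
    by (subst degree_add_eq_right) (simp_all add: degree_monom_eq)
  then show ?case
    by (simp add: cycle_poly.simps(2)[of e "Suc k"])
qed

lemma cycle_poly_Suc_neq_0:
  assumes "e < CHAR('a::idom)"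
  shows "(cycle_poly e (Suc k) :: 'a poly) \<noteq> 0"
  using degree_cycle_poly[OF assms, of k] assms by (auto simp: gr0_conv_Suc)

lemma pderiv_cycle_poly:
  assumes "1 \<le> e" "e < CHAR('a::idom)"
  shows "pderiv (cycle_poly e (Suc k) :: 'a poly) \<noteq> 0 \<and>
    degree (pderiv (cycle_poly e (Suc k) :: 'a poly)) \<le> (e - 1) * (\<Sum>i<k. CHAR('a) ^ i)"
proof (induction k)
  case 0
  show ?case
    using assms by (simp add: cycle_poly.simps(2) power_0_left pderiv_minus pderiv_monom)
next
  case (Suc k)
  let ?p = "CHAR('a)" and ?H = "cycle_poly e (Suc k) :: 'a poly"
  have e: "(of_nat e :: 'a) \<noteq> 0"
    using assms by (auto simp: of_nat_eq_0_iff_char_dvd dest: dvd_imp_le)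
  have H: "?H \<noteq> 0" "degree ?H = ?p ^ k"
    using cycle_poly_Suc_neq_0 degree_cycle_poly assms(2) by blast+
  have "(of_nat (?p ^ Suc k) :: 'a) = 0"
    by (simp add: of_nat_eq_0_iff_char_dvd)
  then have "pderiv (monom (1 :: 'a) (?p ^ Suc k)) = 0"
    by (simp add: pderiv_monom)
  then have pderiv_eq: "pderiv (cycle_poly e (Suc (Suc k)) :: 'a poly) =
      smult (of_nat e) (?H ^ (e - 1) * pderiv ?H)"
    by (simp add: cycle_poly.simps(2)[of e "Suc k"] pderiv_diff pderiv_power)
  have "degree (pderiv (cycle_poly e (Suc (Suc k)) :: 'a poly)) =
      (e - 1) * ?p ^ k + degree (pderiv ?H)"
    unfolding pderiv_eq using e H Suc by (simp add: degree_mult_eq degree_power_eq)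
  also have "\<dots> \<le> (e - 1) * (\<Sum>i<Suc k. ?p ^ i)"
    using Suc by (simp add: algebra_simps)
  finally show ?case
    using pderiv_eq e H Suc by simp
qed

lemma card_roots_cycle_poly_gt:
  assumes "1 \<le> e" "e < CHAR('a::alg_closed_field)"
  shows "(\<Sum>i<k. CHAR('a) ^ i) < card {c :: 'a. poly (cycle_poly e (Suc k)) c = 0}"
proof -
  let ?p = "CHAR('a)" and ?S = "\<Sum>i<k. CHAR('a) ^ i"
    and ?N = "card {c :: 'a. poly (cycle_poly e (Suc k)) c = 0}"
  have pderiv: "pderiv (cycle_poly e (Suc k) :: 'a poly) \<noteq> 0"
    "degree (pderiv (cycle_poly e (Suc k) :: 'a poly)) \<le> (e - 1) * ?S"
    using pderiv_cycle_poly[OF assms] by blast+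
  have "degree (cycle_poly e (Suc k) :: 'a poly) \<le> ?N + degree (pderiv (cycle_poly e (Suc k) :: 'a poly))"
    by (rule degree_le_card_roots_add_degree_pderiv[OF cycle_poly_Suc_neq_0[OF assms(2)] pderiv(1)])
  then have "?p ^ k \<le> ?N + (e - 1) * ?S"
    using pderiv(2) degree_cycle_poly[OF assms(2)] by simp
  moreover have "(?p - 1) * ?S + 1 = ?p ^ k"
    using assms by (intro geometric_sum_nat) simp
  moreover have "(e - 1) * ?S \<le> (?p - 2) * ?S"
    using assms by (intro mult_right_mono) simp_all
  moreover have "(?p - 1) * ?S = (?p - 2) * ?S + ?S"
  proof -
    have "?p - 1 = Suc (?p - 2)"
      using assms by simp
    then show ?thesis
      by simp
  qed
  ultimately show ?thesis
    by linarith
qed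

lemma card_roots_earlier_cycle_polys_le:
  assumes "e < CHAR('a::idom)"
  shows "card (\<Union>j<k. {c :: 'a. poly (cycle_poly e (Suc j)) c = 0}) \<le> (\<Sum>i<k. CHAR('a) ^ i)"
proof -
  have "card (\<Union>j<k. {c :: 'a. poly (cycle_poly e (Suc j)) c = 0}) \<le>
      (\<Sum>j<k. card {c :: 'a. poly (cycle_poly e (Suc j)) c = 0})"
    by (rule card_UN_le) simp
  also have "\<dots> \<le> (\<Sum>j<k. CHAR('a) ^ j)"
  proof (intro sum_mono)
    fix j
    show "card {c :: 'a. poly (cycle_poly e (Suc j)) c = 0} \<le> CHAR('a) ^ j"
      using card_poly_roots_bound[OF cycle_poly_Suc_neq_0[OF assms]] degree_cycle_poly[OF assms]
      by simp
  qed
  finally show ?thesis .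
qed

lemma exists_root_cycle_poly_not_earlier:
  assumes "1 \<le> e" "e < CHAR('a::alg_closed_field)"
  shows "\<exists>c :: 'a. poly (cycle_poly e (Suc k)) c = 0 \<and> (\<forall>j<k. poly (cycle_poly e (Suc j)) c \<noteq> 0)"
proof -
  let ?R = "\<lambda>j. {c :: 'a. poly (cycle_poly e (Suc j)) c = 0}"
  have "finite (\<Union>j<k. ?R j)"
    using poly_roots_finite cycle_poly_Suc_neq_0 assms(2) by blast
  moreover have "card (\<Union>j<k. ?R j) < card (?R k)"
    using card_roots_earlier_cycle_polys_le[OF assms(2), of k] card_roots_cycle_poly_gt[OF assms, of k]
    by linarith
  ultimately have "\<not> ?R k \<subseteq> (\<Union>j<k. ?R j)"
    by (meson card_mono leD)
  then show ?thesis
    by blast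
qed

lemma exists_zero_cycle_of_least_length:
  fixes e :: nat
  assumes prime: "Factorial_Ring.prime CHAR('a::alg_closed_field)"
    and "1 \<le> e" "e < CHAR('a)" "1 \<le> n"
  shows "\<exists>c :: 'a. zero_cycle (corr CHAR('a) e c) n \<and>
    (\<forall>m. 1 \<le> m \<and> m < n \<longrightarrow> \<not> zero_cycle (corr CHAR('a) e c) m)"
proof -
  obtain k where n: "n = Suc k"
    using \<open>1 \<le> n\<close> by (cases n) auto
  obtain c :: 'a where root: "poly (cycle_poly e n) c = 0"
    and not_earlier: "\<And>j. j < k \<Longrightarrow> poly (cycle_poly e (Suc j)) c \<noteq> 0"
    using exists_root_cycle_poly_not_earlier[OF assms(2,3), of k] n by auto
  have "\<not> zero_cycle (corr CHAR('a) e c) m" if "1 \<le> m" "m < n" for m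
  proof
    assume "zero_cycle (corr CHAR('a) e c) m"
    then have "poly (cycle_poly e m) c = 0"
      by (rule zero_cycle_imp_poly_cycle_poly_eq_0[OF prime])
    moreover have "m = Suc (m - 1)" "m - 1 < k"
      using that n by auto
    ultimately show False
      using not_earlier by metis
  qed
  then show ?thesis
    using poly_cycle_poly_eq_0_imp_zero_cycle[OF prime root] by blast
qed

theorem theorem5p1:
  fixes e :: nat
  assumes "1 \<le> e" and "e < CARD('p::prime_card)"
  shows "finite {n::nat. 1 \<le> n \<and>
           \<not> (\<exists>c :: 'p mod_ring alg_closure.
                 zero_cycle (corr CARD('p) e c) n \<and>
                 (\<forall>m. 1 \<le> m \<and> m < n \<longrightarrow> \<not> zero_cycle (corr CARD('p) e c) m))}"
proof -
  have prime: "Factorial_Ring.prime CHAR('p mod_ring alg_closure)"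
    using prime_card by simp
  have e_less: "e < CHAR('p mod_ring alg_closure)"
    using assms(2) by simp
  have "\<exists>c :: 'p mod_ring alg_closure. zero_cycle (corr CARD('p) e c) n \<and>
      (\<forall>m. 1 \<le> m \<and> m < n \<longrightarrow> \<not> zero_cycle (corr CARD('p) e c) m)" if "1 \<le> n" for n
    using exists_zero_cycle_of_least_length[OF prime assms(1) e_less that] by simp
  then show ?thesis
    by (intro finite_subset[OF _ finite.emptyI]) blast
qed

end
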